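(* Let $X$ satisfy assumptions (A) described in the context, with Lévy density $\nu$. Let $w\in\mathbb{R}^d$, $r\in(0,2]$, $B=B(w,r)$. Let $f:\mathbb{R}^d\to[0,\infty)$ be measurable with $\int_{\mathbb{R}^d}f(y)(\nu(y)\wedge1)\,dy<\infty$, and for $y\in B$ put $g(y)=\int_{B^c}f(z)\nu(y-z)\,dz$. Then $g$ is bounded on $B(w,r/2)$ and $$|g(y)-g(w)|\le c\,\frac{(g(w)\wedge g(y))\,|y-w|}{r},\qquad y\in B(w,r/2).$$ Also $g(w)\le c\,g(y)$ for $y\in B(w,r/2)$. Here $c$ depends only on $d,a_1,a_2$.
   Context: Assumptions (A): (H0) $X$ is a pure-jump isotropic Lévy process in $\mathbb{R}^d$ whose Lévy measure is infinite with density $\nu(x)=\nu(|x|)$. (H1) $\nu(r)$ is nonincreasing, absolutely continuous, $-\nu'(r)/r$ nonincreasing (with $\nu(r)=-\int_r^\infty\nu'(\rho)d\rho$), and for some $a_1$: $\nu(r)\le a_1\nu(r+1)$ for $r\ge1$, $\nu(r)\le a_1\nu(2r)$ for $0<r\le1$. (H2) There is $a_2$ such that for every $x_0$, $r\in(0,1]$ and every $h\ge0$ on $\mathbb{R}^d$ harmonic in $B(x_0,r)$, $\sup_{B(x_0,r/2)}h\le a_2\inf_{B(x_0,r/2)}h$ (a Borel $f$ is harmonic in open $D$ if $f(x)=E^xf(X_{\tau_B})$, absolutely convergent, for $x\in B$, for all bounded open $B$ with $\overline B\subset D$, $\tau_B=\inf\{t>0:X_t\notin B\}$). Throughout, unspecified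 constants $c$ depend only on $d,a_1,a_2$. *)

theory Defs
  imports "HOL-Probability.Probability"
begin

text \<open>Radial Levy density nu (a function of r = |x| > 0) satisfying (H1) with constant a1.\<close>
definition H1_density :: "real \<Rightarrow> (real \<Rightarrow> real) \<Rightarrow> bool" where
  "H1_density a1 \<nu> \<longleftrightarrow>
     (\<forall>r>0. \<nu> r \<ge> 0) \<and>
     (\<forall>r s. 0 < r \<longrightarrow> r \<le> s \<longrightarrow> \<nu> s \<le> \<nu> r) \<and>
     (\<exists>\<nu>'. (\<forall>r>0. set_integrable lborel {r..} \<nu>' \<and>
                     \<nu> r = - (LINT \<rho>:{r..}|lborel. \<nu>' \<rho>)) \<and>
           (\<forall>r s. 0 < r \<longrightarrow> r \<le> s \<longrightarrow> - \<nu>' s / s \<le> - \<nu>' r / r)) \<and>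
     (\<forall>r\<ge>1. \<nu> r \<le> a1 * \<nu> (r + 1)) \<and>
     (\<forall>r. 0 < r \<longrightarrow> r \<le> 1 \<longrightarrow> \<nu> r \<le> a1 * \<nu> (2 * r))"

definition levy_H0 :: "'m measure \<Rightarrow> (real \<Rightarrow> 'm \<Rightarrow> 'a::euclidean_space) \<Rightarrow> (real \<Rightarrow> real) \<Rightarrow> bool" where
  "levy_H0 M X \<nu> \<longleftrightarrow>
     prob_space M \<and>
     (\<forall>t\<ge>0. X t \<in> borel_measurable M) \<and>
     (\<forall>\<omega>\<in>space M. X 0 \<omega> = 0) \<and>
     (\<forall>\<omega>\<in>space M. \<forall>t\<ge>0. continuous (at_right t) (\<lambda>s. X s \<omega>) \<and>
                       (t > 0 \<longrightarrow> (\<exists>l. ((\<lambda>s. X s \<omega>) \<longlongrightarrow> l) (at_left t)))) \<and>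
     (\<forall>(n::nat) (tt::nat \<Rightarrow> real). tt 0 \<ge> 0 \<longrightarrow> (\<forall>i<n. tt i < tt (Suc i)) \<longrightarrow>
         prob_space.indep_vars M (\<lambda>_. borel) (\<lambda>i \<omega>. X (tt (Suc i)) \<omega> - X (tt i) \<omega>) {..<n}) \<and>
     (\<forall>s t. 0 \<le> s \<longrightarrow> 0 \<le> t \<longrightarrow>
         distr M borel (\<lambda>\<omega>. X (s + t) \<omega> - X s \<omega>) = distr M borel (X t)) \<and>
     (\<integral>\<^sup>+ (x::'a::euclidean_space). ennreal (min ((norm x)\<^sup>2) 1 * \<nu> (norm x)) \<partial>lborel) < \<infinity> \<and>
     (\<integral>\<^sup>+ (x::'a::euclidean_space). ennreal (\<nu> (norm x)) \<partial>lborel) = \<infinity> \<and>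
     (\<forall>t\<ge>0. \<forall>\<xi>.
         (LINT \<omega>|M. cis (\<xi> \<bullet> X t \<omega>)) =
         complex_of_real (exp (- t * enn2real (\<integral>\<^sup>+ x. ennreal ((1 - cos (\<xi> \<bullet> x)) * \<nu> (norm x)) \<partial>lborel))))"

text \<open>Position of the process started at x at its first exit time from B:
  X^x_{tau_B}, where X^x_t = x + X_t and tau_B = inf {t > 0. X^x_t \<notin> B}.\<close>
definition exit_pos :: "(real \<Rightarrow> 'm \<Rightarrow> 'a::real_normed_vector) \<Rightarrow> 'a \<Rightarrow> 'a set \<Rightarrow> 'm \<Rightarrow> 'a" where
  "exit_pos X x B \<omega> = x + X (Inf {t. t > 0 \<and> x + X t \<omega> \<notin> B}) \<omega>"

definition harmonic_in :: "'m measure \<Rightarrow> (real \<Rightarrow> 'm \<Rightarrow> 'a::euclidean_space) \<Rightarrow> 'a set \<Rightarrow> ('a \<Rightarrow> real) \<Rightarrow> bool" where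
  "harmonic_in M X D h \<longleftrightarrow>
     h \<in> borel_measurable borel \<and>
     (\<forall>B x. open B \<longrightarrow> bounded B \<longrightarrow> closure B \<subseteq> D \<longrightarrow> x \<in> B \<longrightarrow>
        integrable (completion M) (\<lambda>\<omega>. h (exit_pos X x B \<omega>)) \<and>
        h x = (LINT \<omega>|completion M. h (exit_pos X x B \<omega>)))"

definition harnack_H2 :: "'m measure \<Rightarrow> (real \<Rightarrow> 'm \<Rightarrow> 'a::euclidean_space) \<Rightarrow> real \<Rightarrow> bool" where
  "harnack_H2 M X a2 \<longleftrightarrow>
     (\<forall>x0 r h. 0 < r \<longrightarrow> r \<le> 1 \<longrightarrow> (\<forall>x. h x \<ge> 0) \<longrightarrow> harmonic_in M X (ball x0 r) h \<longrightarrow>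
        (\<forall>x\<in>ball x0 (r/2). \<forall>y\<in>ball x0 (r/2). h x \<le> a2 * h y))"

definition assumptions_A :: "real \<Rightarrow> real \<Rightarrow> 'm measure \<Rightarrow> (real \<Rightarrow> 'm \<Rightarrow> 'a::euclidean_space) \<Rightarrow> (real \<Rightarrow> real) \<Rightarrow> bool" where
  "assumptions_A a1 a2 M X \<nu> \<longleftrightarrow> levy_H0 M X \<nu> \<and> H1_density a1 \<nu> \<and> harnack_H2 M X a2"

end

theory Submission
  imports Defs
begin

text \<open>For \<open>y\<close> near \<open>w\<close> and \<open>z\<close> outside \<open>B(w,r)\<close>, the radii \<open>|y - z|\<close> and \<open>|w - z|\<close>
  both exceed \<open>r/2\<close> and differ by at most \<open>|y - w|\<close>. At such radii (H1) makes \<open>\<nu>\<close>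
  comparable (doubling below 1, unit shifts above 1) and, through the monotonicity of
  \<open>-\<nu>'(\<rho>)/\<rho>\<close>, relatively Lipschitz: \<open>|\<nu>(s) - \<nu>(t)| \<le> 16 a1\<^sup>2 \<nu>(t) |s - t| / r\<close>.
  Both bounds hold pointwise for the integrands of \<open>g(y)\<close> and \<open>g(w)\<close> and hence for the
  integrals. \<open>g(w)\<close> is finite since \<open>\<nu>(|w - z|) \<le> C min(\<nu>(|z|), 1)\<close> off \<open>B(w,r)\<close>; the
  infinite Levy measure only serves to make \<open>\<nu>\<close> positive, which forces \<open>a1 \<ge> 1\<close>.\<close>

lemma set_integral_Ico_const:
  fixes c p q :: real
  assumes "p \<le> q"
  shows "set_integrable lborel {p..<q} (\<lambda>_. c)" and "(LINT x:{p..<q}|lborel. c) = c * (q - p)"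
proof -
  show "set_integrable lborel {p..<q} (\<lambda>_. c)"
    unfolding set_integrable_def
    by (auto intro!: integrable_scaleR_left integrable_real_indicator simp: emeasure_lborel_Ico assms)
  show "(LINT x:{p..<q}|lborel. c) = c * (q - p)"
    using assms by (subst set_integral_const) auto
qed

lemma tail_integral_diff:
  fixes \<nu> \<nu>' :: "real \<Rightarrow> real"
  assumes "\<And>r. 0 < r \<Longrightarrow> set_integrable lborel {r..} \<nu>'"
    and "\<And>r. 0 < r \<Longrightarrow> \<nu> r = - (LINT \<rho>:{r..}|lborel. \<nu>' \<rho>)"
    and "0 < p" "p \<le> q"
  shows "\<nu> p - \<nu> q = (LINT \<rho>:{p..<q}|lborel. - \<nu>' \<rho>)"
proof -
  have ip: "set_integrable lborel {p..} \<nu>'" using assms by auto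
  have i1: "set_integrable lborel {p..<q} \<nu>'" by (rule set_integrable_subset[OF ip]) auto
  have i2: "set_integrable lborel {q..} \<nu>'" by (rule set_integrable_subset[OF ip]) (use assms in auto)
  have "{p..} = {p..<q} \<union> {q..}" using assms by auto
  then have "(LINT \<rho>:{p..}|lborel. \<nu>' \<rho>) = (LINT \<rho>:{p..<q}|lborel. \<nu>' \<rho>) + (LINT \<rho>:{q..}|lborel. \<nu>' \<rho>)"
    using set_integral_Un[OF _ i1 i2] by (simp add: ivl_disj_int)
  moreover have "(LINT \<rho>:{p..<q}|lborel. - \<nu>' \<rho>) = - (LINT \<rho>:{p..<q}|lborel. \<nu>' \<rho>)"
    using i1 by (rule set_integral_uminus)
  ultimately show ?thesis using assms by simp
qed

text \<open>With \<open>\<psi> = -\<nu>'(a)/a\<close>, monotonicity of \<open>-\<nu>'(\<rho>)/\<rho>\<close> bounds \<open>-\<nu>'\<close> above by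
  \<open>b max \<psi> 0\<close> on \<open>[a,b)\<close> and, if \<open>\<psi> > 0\<close>, below by \<open>a' \<psi>\<close> on \<open>[a',a)\<close>; integrating the
  latter gives \<open>a' (a - a') \<psi> \<le> \<nu>(a')\<close>.\<close>
lemma tail_integral_decrement_le:
  fixes \<nu> \<nu>' :: "real \<Rightarrow> real"
  assumes int: "\<And>r. 0 < r \<Longrightarrow> set_integrable lborel {r..} \<nu>'"
    and eq: "\<And>r. 0 < r \<Longrightarrow> \<nu> r = - (LINT \<rho>:{r..}|lborel. \<nu>' \<rho>)"
    and mono: "\<And>r s. 0 < r \<Longrightarrow> r \<le> s \<Longrightarrow> - \<nu>' s / s \<le> - \<nu>' r / r"
    and nonneg: "0 \<le> \<nu> a'" "0 \<le> \<nu> a"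
    and "0 < a'" "a' < a" "a \<le> b"
  shows "\<nu> a - \<nu> b \<le> b * (b - a) * \<nu> a' / (a' * (a - a'))"
proof -
  define \<psi> where "\<psi> = - \<nu>' a / a"
  have minus_integrable: "set_integrable lborel {p..<q} (\<lambda>\<rho>. - \<nu>' \<rho>)" if "0 < p" for p q
  proof -
    have "set_integrable lborel {p..<q} \<nu>'"
      by (rule set_integrable_subset[of _ "{p..}"]) (use int that in auto)
    then show ?thesis unfolding set_integrable_def by (auto dest: integrable_minus)
  qed
  have pointwise: "- \<nu>' x = x * (- \<nu>' x / x)" if "0 < x" for x
    using that by simp
  have "\<nu> a - \<nu> b = (LINT \<rho>:{a..<b}|lborel. - \<nu>' \<rho>)"
    using tail_integral_diff[OF int eq] assms by auto
  also have "\<dots> \<le> (LINT \<rho>:{a..<b}|lborel. b * max \<psi> 0)"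
  proof (rule set_integral_mono)
    fix x assume x: "x \<in> {a..<b}"
    have "- \<nu>' x / x \<le> \<psi>" unfolding \<psi>_def using mono[of a x] x assms by auto
    then have "x * (- \<nu>' x / x) \<le> x * max \<psi> 0" using x assms by (intro mult_left_mono) auto
    also have "\<dots> \<le> b * max \<psi> 0" using x by (intro mult_right_mono) auto
    finally show "- \<nu>' x \<le> b * max \<psi> 0" using pointwise[of x] x assms by simp
  qed (use minus_integrable set_integral_Ico_const assms in auto)
  also have "\<dots> = b * max \<psi> 0 * (b - a)" using assms by (simp add: set_integral_Ico_const)
  finally have upper: "\<nu> a - \<nu> b \<le> b * (b - a) * max \<psi> 0" by (simp add: algebra_simps)
  have "max \<psi> 0 \<le> \<nu> a' / (a' * (a - a'))"
  proof (cases "\<psi> \<le> 0")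
    case True
    moreover have "0 \<le> \<nu> a' / (a' * (a - a'))"
      using nonneg(1) \<open>0 < a'\<close> \<open>a' < a\<close> by (intro divide_nonneg_pos) auto
    ultimately show ?thesis by simp
  next
    case False
    have "a' * \<psi> * (a - a') = (LINT \<rho>:{a'..<a}|lborel. a' * \<psi>)"
      using assms by (simp add: set_integral_Ico_const)
    also have "\<dots> \<le> (LINT \<rho>:{a'..<a}|lborel. - \<nu>' \<rho>)"
    proof (rule set_integral_mono)
      fix x assume x: "x \<in> {a'..<a}"
      have "\<psi> \<le> - \<nu>' x / x" unfolding \<psi>_def using mono[of x a] x assms by auto
      then have "x * \<psi> \<le> x * (- \<nu>' x / x)" using x assms by (intro mult_left_mono) auto
      moreover have "a' * \<psi> \<le> x * \<psi>" using x False by (intro mult_right_mono) auto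
      ultimately show "a' * \<psi> \<le> - \<nu>' x" using pointwise[of x] x assms by simp
    qed (use minus_integrable set_integral_Ico_const assms in auto)
    also have "\<dots> = \<nu> a' - \<nu> a" using tail_integral_diff[OF int eq] assms by auto
    finally have "a' * (a - a') * \<psi> \<le> \<nu> a'" using nonneg(2) by (simp add: algebra_simps)
    then show ?thesis using \<open>0 < a'\<close> \<open>a' < a\<close> False by (simp add: le_divide_eq mult.commute)
  qed
  then have "b * (b - a) * max \<psi> 0 \<le> b * (b - a) * (\<nu> a' / (a' * (a - a')))"
    using assms by (intro mult_left_mono) auto
  with upper show ?thesis by simp
qed

lemma H1_density_nonneg: "H1_density a1 \<nu> \<Longrightarrow> 0 < r \<Longrightarrow> 0 \<le> \<nu> r"
  unfolding H1_density_def by blast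

lemma H1_density_antimono: "H1_density a1 \<nu> \<Longrightarrow> 0 < r \<Longrightarrow> r \<le> s \<Longrightarrow> \<nu> s \<le> \<nu> r"
  unfolding H1_density_def by blast

lemma H1_density_shift: "H1_density a1 \<nu> \<Longrightarrow> 1 \<le> r \<Longrightarrow> \<nu> r \<le> a1 * \<nu> (r + 1)"
  unfolding H1_density_def by blast

lemma H1_density_doubling: "H1_density a1 \<nu> \<Longrightarrow> 0 < r \<Longrightarrow> r \<le> 1 \<Longrightarrow> \<nu> r \<le> a1 * \<nu> (2 * r)"
  unfolding H1_density_def by blast

lemma H1_density_decrement_le:
  assumes H: "H1_density a1 \<nu>" and "0 < a'" "a' < a" "a \<le> b"
  shows "\<nu> a - \<nu> b \<le> b * (b - a) * \<nu> a' / (a' * (a - a'))"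
proof -
  obtain \<nu>' where "\<forall>r>0. set_integrable lborel {r..} \<nu>' \<and> \<nu> r = - (LINT \<rho>:{r..}|lborel. \<nu>' \<rho>)"
    and "\<forall>r s. 0 < r \<longrightarrow> r \<le> s \<longrightarrow> - \<nu>' s / s \<le> - \<nu>' r / r"
    using H unfolding H1_density_def by blast
  then show ?thesis
    using assms H1_density_nonneg[OF H] by (intro tail_integral_decrement_le[of \<nu>' \<nu>]) auto
qed

lemma H1_density_comparable:
  assumes H: "H1_density a1 \<nu>" and "0 \<le> a1" "0 < s" "s \<le> t" "t \<le> 2 * s" "t \<le> s + 1"
  shows "\<nu> s \<le> a1 * \<nu> t"
proof (cases "s \<le> 1")
  case True
  have "\<nu> s \<le> a1 * \<nu> (2 * s)" using H1_density_doubling[OF H] True assms by auto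
  also have "\<dots> \<le> a1 * \<nu> t" using assms by (intro mult_left_mono H1_density_antimono[OF H]) auto
  finally show ?thesis .
next
  case False
  have "\<nu> s \<le> a1 * \<nu> (s + 1)" using H1_density_shift[OF H] False by auto
  also have "\<dots> \<le> a1 * \<nu> t" using assms by (intro mult_left_mono H1_density_antimono[OF H]) auto
  finally show ?thesis .
qed

lemma H1_density_shift_iter:
  assumes H: "H1_density a1 \<nu>" and "0 \<le> a1" "1 \<le> t"
  shows "\<nu> t \<le> a1 ^ n * \<nu> (t + real n)"
proof (induction n)
  case (Suc n)
  have "a1 ^ n * \<nu> (t + real n) \<le> a1 ^ n * (a1 * \<nu> (t + real n + 1))"
    using assms by (intro mult_left_mono H1_density_shift[OF H]) auto
  with Suc show ?case by (simp add: algebra_simps)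
qed simp

lemma H1_density_const_ge_one:
  assumes H: "H1_density a1 \<nu>" and pos: "0 < \<nu> 1"
  shows "1 \<le> a1"
proof -
  have le: "\<nu> 1 \<le> a1 * \<nu> 2" using H1_density_shift[OF H, of 1] by simp
  have "\<nu> 2 \<le> \<nu> 1" "0 \<le> \<nu> 2" using H1_density_antimono[OF H] H1_density_nonneg[OF H] by auto
  with le pos have "0 < a1" by (smt (verit) mult_nonpos_nonneg)
  then have "a1 * \<nu> 2 \<le> a1 * \<nu> 1" using \<open>\<nu> 2 \<le> \<nu> 1\<close> by simp
  with le pos show ?thesis by (smt (verit) mult_le_cancel_right1)
qed

lemma H1_density_pos:
  assumes H: "H1_density a1 \<nu>" and pos: "0 < \<nu> 1" and "0 < t"
  shows "0 < \<nu> t"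
proof -
  obtain n :: nat where "t \<le> real n" using real_arch_simple by blast
  then have n: "t \<le> 1 + real n" by simp
  have a1: "1 \<le> a1" by (rule H1_density_const_ge_one[OF H pos])
  have "\<nu> 1 \<le> a1 ^ n * \<nu> (1 + real n)" using H1_density_shift_iter[OF H] a1 by simp
  also have "\<dots> \<le> a1 ^ n * \<nu> t" using a1 n assms by (intro mult_left_mono H1_density_antimono[OF H]) auto
  finally have "0 < a1 ^ n * \<nu> t" using pos by linarith
  then show ?thesis using a1 by (simp add: zero_less_mult_iff)
qed

text \<open>If \<open>\<nu>(1) = 0\<close>, doubling forces \<open>\<nu>(2^{-n}) = 0\<close> for all \<open>n\<close>, so \<open>\<nu>\<close> vanishes on \<open>(0,\<infinity>)\<close>.\<close>
lemma H1_density_pos_at_one: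
  assumes H: "H1_density a1 \<nu>"
    and infinite: "(\<integral>\<^sup>+ (x::'a::euclidean_space). ennreal (\<nu> (norm x)) \<partial>lborel) = \<infinity>"
  shows "0 < \<nu> 1"
proof (rule ccontr)
  assume "\<not> 0 < \<nu> 1"
  then have zero_at_one: "\<nu> 1 = 0" using H1_density_nonneg[OF H, of 1] by simp
  have zero_pow: "\<nu> ((1/2) ^ n) = 0" for n
  proof (induction n)
    case (Suc n)
    have "\<nu> ((1/2) ^ Suc n) \<le> a1 * \<nu> (2 * (1/2) ^ Suc n)"
      by (rule H1_density_doubling[OF H]) (use power_le_one[of "1/2::real" n] in auto)
    with Suc have "\<nu> ((1/2) ^ Suc n) \<le> 0" by simp
    then show ?case using H1_density_nonneg[OF H, of "(1/2) ^ Suc n"] by simp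
  qed (use zero_at_one in simp)
  have zero: "\<nu> t = 0" if t: "0 < t" for t
  proof -
    obtain n where "(1/2::real) ^ n < t" using real_arch_pow_inv[OF t, of "1/2"] by auto
    then have "\<nu> t \<le> \<nu> ((1/2) ^ n)" by (intro H1_density_antimono[OF H]) auto
    then show ?thesis using zero_pow[of n] H1_density_nonneg[OF H t] by simp
  qed
  have "(\<integral>\<^sup>+ (x::'a). ennreal (\<nu> (norm x)) \<partial>lborel) = (\<integral>\<^sup>+ (x::'a). 0 \<partial>lborel)"
    by (intro nn_integral_cong_AE eventually_mono[OF AE_lborel_singleton[of 0]]) (simp add: zero)
  then show False using infinite by simp
qed

lemma H1_density_local_lipschitz:
  assumes H: "H1_density a1 \<nu>" and a1: "0 \<le> a1"
    and r: "0 < r" "r \<le> 2" and st: "r/2 < s" "s \<le> t" "t \<le> s + r/2"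
  shows "\<nu> s - \<nu> t \<le> 16 * a1\<^sup>2 * \<nu> t * (t - s) / r"
proof -
  define \<delta> where "\<delta> = min (s/2) 1"
  define a' where "a' = s - \<delta>"
  have \<delta>: "0 < \<delta>" "\<delta> \<le> s/2" "\<delta> \<le> 1" "r \<le> 4 * \<delta>" using r st unfolding \<delta>_def by auto
  have a': "0 < a'" "a' < s" "s \<le> 2 * a'" "s \<le> a' + 1" "t \<le> 4 * a'"
    using \<delta> r st unfolding a'_def by auto
  have "\<nu> a' \<le> a1 * \<nu> s" by (rule H1_density_comparable[OF H a1]) (use a' in auto)
  also have "\<dots> \<le> a1 * (a1 * \<nu> t)"
    using r st a1 by (intro mult_left_mono H1_density_comparable[OF H]) auto
  finally have near: "\<nu> a' \<le> a1\<^sup>2 * \<nu> t" by (simp add: power2_eq_square)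
  have "t * r \<le> (4 * a') * (4 * \<delta>)" using a' \<delta> r st by (intro mult_mono) auto
  then have ratio: "t / (a' * \<delta>) \<le> 16 / r" using a' \<delta> r by (simp add: divide_simps)
  have "\<nu> s - \<nu> t \<le> t * (t - s) * \<nu> a' / (a' * (s - a'))"
    by (rule H1_density_decrement_le[OF H]) (use a' st in auto)
  also have "\<dots> = (t - s) * \<nu> a' * (t / (a' * \<delta>))" unfolding a'_def by simp
  also have "\<dots> \<le> (t - s) * (a1\<^sup>2 * \<nu> t) * (16 / r)"
    using near ratio st a' H1_density_nonneg[OF H, of a'] \<delta> r
    by (intro mult_mono mult_left_mono) auto
  finally show ?thesis by (simp add: mult_ac)
qed

lemma H1_density_relative_lipschitz:
  assumes H: "H1_density a1 \<nu>" and a1: "0 \<le> a1" and r: "0 < r" "r \<le> 2"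
    and st: "r/2 < s" "r/2 < t" "\<bar>s - t\<bar> \<le> d" "d \<le> r/2"
  shows "\<nu> s \<le> (1 + 16 * a1\<^sup>2 * d / r) * \<nu> t"
proof -
  have \<nu>t: "0 \<le> \<nu> t" using H1_density_nonneg[OF H] st r by simp
  have e: "0 \<le> 16 * a1\<^sup>2 * d / r" using st r by simp
  show ?thesis
  proof (cases "s \<le> t")
    case True
    have "\<nu> s - \<nu> t \<le> 16 * a1\<^sup>2 * \<nu> t * (t - s) / r"
      by (rule H1_density_local_lipschitz[OF H a1 r]) (use st True in auto)
    also have "\<dots> \<le> 16 * a1\<^sup>2 * \<nu> t * d / r"
      using st r \<nu>t by (intro divide_right_mono mult_left_mono) auto
    finally show ?thesis by (simp add: algebra_simps)
  next
    case False
    then have "\<nu> s \<le> \<nu> t" using st r by (intro H1_density_antimono[OF H]) auto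
    also have "\<dots> \<le> (1 + 16 * a1\<^sup>2 * d / r) * \<nu> t" using \<nu>t e by (simp add: mult_le_cancel_right1)
    finally show ?thesis .
  qed
qed

lemma H1_density_comparable_near:
  assumes H: "H1_density a1 \<nu>" and a1: "1 \<le> a1" and r: "0 < r" "r \<le> 2"
    and st: "r/2 < s" "r/2 < t" "\<bar>s - t\<bar> \<le> r/2"
  shows "\<nu> s \<le> a1 * \<nu> t"
proof (cases "s \<le> t")
  case True
  show ?thesis by (rule H1_density_comparable[OF H]) (use a1 st r True in auto)
next
  case False
  have "\<nu> s \<le> \<nu> t" using False st r by (intro H1_density_antimono[OF H]) auto
  also have "\<dots> \<le> a1 * \<nu> t" using a1 H1_density_nonneg[OF H, of t] st r by (simp add: mult_le_cancel_right1)
  finally show ?thesis .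
qed

text \<open>Far from \<open>w\<close> the shift by \<open>w\<close> costs a factor \<open>a1^N\<close> with \<open>N \<ge> |w|\<close>; near \<open>w\<close> the
  kernel is bounded by \<open>\<nu>(r)\<close> while \<open>\<nu>(|z|) \<ge> \<nu>(N + 1) > 0\<close>.\<close>
lemma H1_density_tail_bound:
  fixes w :: "'a::real_normed_vector"
  assumes H: "H1_density a1 \<nu>" and pos: "0 < \<nu> 1" and r: "0 < r"
  obtains C where "0 \<le> C" "\<And>z. z \<notin> ball w r \<Longrightarrow> z \<noteq> 0 \<Longrightarrow> \<nu> (norm (w - z)) \<le> C * min (\<nu> (norm z)) 1"
proof -
  have a1: "1 \<le> a1" by (rule H1_density_const_ge_one[OF H pos])
  define N where "N = nat \<lceil>norm w\<rceil>"
  have N: "norm w \<le> real N" unfolding N_def by linarith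
  define C1 where "C1 = a1 ^ N + \<nu> r / \<nu> (1 + real N)"
  have \<nu>N: "0 < \<nu> (1 + real N)" by (rule H1_density_pos[OF H pos]) simp
  have \<nu>r: "0 \<le> \<nu> r" using H1_density_nonneg[OF H r] .
  have C1: "0 \<le> C1" unfolding C1_def using a1 \<nu>N \<nu>r by simp
  have near: "\<nu> (norm (w - z)) \<le> \<nu> r" and far: "\<nu> (norm (w - z)) \<le> C1 * \<nu> (norm z)"
    if z: "z \<notin> ball w r" "z \<noteq> 0" for z :: 'a
  proof -
    define d where "d = norm (w - z)"
    have "r \<le> d" using z unfolding d_def by (simp add: dist_norm)
    then show near': "\<nu> (norm (w - z)) \<le> \<nu> r" unfolding d_def by (rule H1_density_antimono[OF H r])
    have z_le: "norm z \<le> norm w + d" unfolding d_def using norm_triangle_ineq4[of w "w - z"] by simp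
    have \<nu>z: "0 \<le> \<nu> (norm z)" using H1_density_nonneg[OF H] z by simp
    show "\<nu> (norm (w - z)) \<le> C1 * \<nu> (norm z)"
    proof (cases "1 \<le> d")
      case True
      have "\<nu> d \<le> a1 ^ N * \<nu> (d + real N)" using H1_density_shift_iter[OF H _ True] a1 by simp
      also have "\<dots> \<le> a1 ^ N * \<nu> (norm z)"
        using a1 z_le N z by (intro mult_left_mono H1_density_antimono[OF H]) auto
      also have "\<dots> \<le> C1 * \<nu> (norm z)" unfolding C1_def using \<nu>z \<nu>r \<nu>N by (intro mult_right_mono) auto
      finally show ?thesis unfolding d_def .
    next
      case False
      have "\<nu> r = \<nu> r / \<nu> (1 + real N) * \<nu> (1 + real N)" using \<nu>N by simp
      also have "\<dots> \<le> \<nu> r / \<nu> (1 + real N) * \<nu> (norm z)"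
        using z_le N z False \<nu>N \<nu>r by (intro mult_left_mono H1_density_antimono[OF H]) auto
      also have "\<dots> \<le> C1 * \<nu> (norm z)" unfolding C1_def using \<nu>z a1 by (intro mult_right_mono) auto
      finally show ?thesis using near' by linarith
    qed
  qed
  show ?thesis
  proof (rule that[of "C1 + \<nu> r"])
    show "0 \<le> C1 + \<nu> r" using C1 \<nu>r by simp
    fix z :: 'a assume z: "z \<notin> ball w r" "z \<noteq> 0"
    have \<nu>z: "0 \<le> \<nu> (norm z)" using H1_density_nonneg[OF H] z by simp
    show "\<nu> (norm (w - z)) \<le> (C1 + \<nu> r) * min (\<nu> (norm z)) 1"
    proof (cases "\<nu> (norm z) \<le> 1")
      case True
      have "C1 * \<nu> (norm z) \<le> (C1 + \<nu> r) * \<nu> (norm z)" using \<nu>r \<nu>z by (intro mult_right_mono) auto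
      then show ?thesis using far[OF z] True by simp
    qed (use near[OF z] C1 in simp)
  qed
qed

lemma H1_density_truncated_measurable:
  fixes y :: "'a::euclidean_space"
  assumes H: "H1_density a1 \<nu>" and e: "0 < e"
  shows "(\<lambda>z. \<nu> (max (norm (y - z)) e)) \<in> borel_measurable lebesgue"
proof -
  have "mono (\<lambda>t. - \<nu> (max t e))"
    unfolding mono_def using e by (auto intro!: H1_density_antimono[OF H])
  then have "(\<lambda>t. - \<nu> (max t e)) \<in> borel_measurable borel" by (rule borel_measurable_mono)
  then have "(\<lambda>t. \<nu> (max t e)) \<in> borel_measurable borel"
    using borel_measurable_uminus by fastforce
  moreover have "(\<lambda>z::'a. norm (y - z)) \<in> borel_measurable lebesgue"
    by (intro measurable_completion) simp
  ultimately show ?thesis using measurable_compose by (auto simp: o_def)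
qed

lemma ball_exterior_norm_bounds:
  fixes y w z :: "'a::real_normed_vector"
  assumes y: "y \<in> ball w (r/2)" and z: "z \<notin> ball w r"
  shows "r/2 < norm (y - z)" "r \<le> norm (w - z)" "\<bar>norm (y - z) - norm (w - z)\<bar> \<le> dist y w"
proof -
  have "dist w z \<le> dist w y + dist y z" by (rule dist_triangle)
  with y z show "r/2 < norm (y - z)" "r \<le> norm (w - z)" by (auto simp: dist_norm)
  have "\<bar>norm (y - z) - norm (w - z)\<bar> \<le> norm ((y - z) - (w - z))" by (rule norm_triangle_ineq3)
  then show "\<bar>norm (y - z) - norm (w - z)\<bar> \<le> dist y w" by (simp add: dist_norm)
qed

lemma nn_integral_le_cmult:
  fixes F G :: "'b \<Rightarrow> real"
  assumes F: "F \<in> borel_measurable M" and c: "0 < c" and le: "AE x in M. F x \<le> c * G x"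
  shows "(\<integral>\<^sup>+ x. ennreal (F x) \<partial>M) \<le> ennreal c * (\<integral>\<^sup>+ x. ennreal (G x) \<partial>M)"
proof -
  have "(\<integral>\<^sup>+ x. ennreal (F x) \<partial>M) = (\<integral>\<^sup>+ x. ennreal c * ennreal (F x / c) \<partial>M)"
    using c by (intro nn_integral_cong) (simp add: ennreal_mult'[symmetric])
  also have "\<dots> = ennreal c * (\<integral>\<^sup>+ x. ennreal (F x / c) \<partial>M)"
    using F by (intro nn_integral_cmult) auto
  also have "\<dots> \<le> ennreal c * (\<integral>\<^sup>+ x. ennreal (G x) \<partial>M)"
    using le c by (intro mult_left_mono nn_integral_mono_AE) (auto elim!: eventually_mono
        intro: ennreal_leI simp: divide_le_eq mult.commute)
  finally show ?thesis .
qed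

text \<open>Pointwise two-sided comparison within a factor \<open>1 + e\<close> survives integration, even
  when the integrals are infinite (then both real parts are \<open>0\<close>).\<close>
lemma enn2real_nn_integral_relative_diff:
  fixes F G :: "'b \<Rightarrow> real"
  assumes meas: "F \<in> borel_measurable M" "G \<in> borel_measurable M" and e: "0 \<le> e"
    and FG: "\<And>x. F x \<le> (1 + e) * G x" and GF: "\<And>x. G x \<le> (1 + e) * F x"
  shows "\<bar>enn2real (\<integral>\<^sup>+ x. ennreal (F x) \<partial>M) - enn2real (\<integral>\<^sup>+ x. ennreal (G x) \<partial>M)\<bar>
      \<le> e * min (enn2real (\<integral>\<^sup>+ x. ennreal (F x) \<partial>M)) (enn2real (\<integral>\<^sup>+ x. ennreal (G x) \<partial>M))"
proof -
  define IF where "IF = (\<integral>\<^sup>+ x. ennreal (F x) \<partial>M)"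
  define IG where "IG = (\<integral>\<^sup>+ x. ennreal (G x) \<partial>M)"
  have IF: "IF \<le> ennreal (1 + e) * IG" unfolding IF_def IG_def
    using e FG by (intro nn_integral_le_cmult meas) auto
  have IG: "IG \<le> ennreal (1 + e) * IF" unfolding IF_def IG_def
    using e GF by (intro nn_integral_le_cmult meas) auto
  show ?thesis
  proof (cases "IG = \<infinity>")
    case True
    then have "IF = \<infinity>" using IG by (auto simp: ennreal_mult_eq_top_iff top_unique)
    with True show ?thesis unfolding IF_def IG_def by simp
  next
    case False
    then have "IG < \<infinity>" by (simp add: less_top)
    moreover from this have "ennreal (1 + e) * IG < \<infinity>" by (simp add: ennreal_mult_less_top)
    with IF have "IF < \<infinity>" by (rule le_less_trans)
    ultimately have fin: "IG < \<infinity>" "IF < \<infinity>" .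
    have "enn2real IF \<le> (1 + e) * enn2real IG" "enn2real IG \<le> (1 + e) * enn2real IF"
      using enn2real_mono[OF IF] enn2real_mono[OF IG] fin e
      by (auto simp: enn2real_mult ennreal_mult_less_top simp del: ennreal_plus)
    then show ?thesis unfolding IF_def[symmetric] IG_def[symmetric] by (auto simp: algebra_simps)
  qed
qed

lemma H1_density_exterior_comparison:
  fixes y w z :: "'a::real_normed_vector"
  assumes H: "H1_density a1 \<nu>" and a1: "1 \<le> a1" and r: "0 < r" "r \<le> 2"
    and y: "y \<in> ball w (r/2)" and z: "z \<notin> ball w r"
  shows "\<nu> (norm (y - z)) \<le> a1 * \<nu> (norm (w - z))" "\<nu> (norm (w - z)) \<le> a1 * \<nu> (norm (y - z))"
    and "\<nu> (norm (y - z)) \<le> (1 + 16 * a1\<^sup>2 * dist y w / r) * \<nu> (norm (w - z))"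
      "\<nu> (norm (w - z)) \<le> (1 + 16 * a1\<^sup>2 * dist y w / r) * \<nu> (norm (y - z))"
proof -
  note near = ball_exterior_norm_bounds[OF y z]
  have "dist y w \<le> r/2" "\<bar>norm (w - z) - norm (y - z)\<bar> \<le> dist y w"
    using y near(3) by (auto simp: dist_commute abs_minus_commute)
  note near = near this
  show "\<nu> (norm (y - z)) \<le> a1 * \<nu> (norm (w - z))" "\<nu> (norm (w - z)) \<le> a1 * \<nu> (norm (y - z))"
    using near r by (intro H1_density_comparable_near[OF H a1 r]; linarith)+
  show "\<nu> (norm (y - z)) \<le> (1 + 16 * a1\<^sup>2 * dist y w / r) * \<nu> (norm (w - z))"
    "\<nu> (norm (w - z)) \<le> (1 + 16 * a1\<^sup>2 * dist y w / r) * \<nu> (norm (y - z))"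
    using near r a1 by (intro H1_density_relative_lipschitz[OF H _ r]; linarith)+
qed

lemma exterior_integrand_measurable:
  fixes w y :: "'a::euclidean_space"
  assumes H: "H1_density a1 \<nu>" and f: "f \<in> borel_measurable lebesgue"
    and r: "0 < r" and y: "y \<in> ball w (r/2)"
  shows "(\<lambda>z. f z * \<nu> (norm (y - z)) * indicator (- ball w r) z) \<in> borel_measurable lebesgue"
proof -
  have "(\<lambda>z. f z * \<nu> (norm (y - z)) * indicator (- ball w r) z)
      = (\<lambda>z. f z * \<nu> (max (norm (y - z)) (r/2)) * indicator (- ball w r) z)"
    using ball_exterior_norm_bounds(1)[OF y] by (force split: split_indicator simp: max_def)
  moreover have "(\<lambda>z::'a. indicator (- ball w r) z :: real) \<in> borel_measurable lebesgue"
    by (rule borel_measurable_indicator) (auto intro: measurable_completion)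
  ultimately show ?thesis
    using f H1_density_truncated_measurable[OF H, of "r/2" y] r by simp
qed

lemma exterior_potential_finite:
  fixes w :: "'a::euclidean_space" and f :: "'a \<Rightarrow> real"
  assumes H: "H1_density a1 \<nu>" and pos: "0 < \<nu> 1" and r: "0 < r"
    and f_meas: "f \<in> borel_measurable lebesgue" and f_nonneg: "\<And>y. 0 \<le> f y"
    and f_int: "(\<integral>\<^sup>+ y. ennreal (f y * min (\<nu> (norm y)) 1) \<partial>lebesgue) < \<infinity>"
  shows "(\<integral>\<^sup>+ z. ennreal (f z * \<nu> (norm (w - z)) * indicator (- ball w r) z) \<partial>lebesgue) < \<infinity>"
proof -
  obtain C where C: "0 \<le> C" "\<And>z. z \<notin> ball w r \<Longrightarrow> z \<noteq> 0 \<Longrightarrow> \<nu> (norm (w - z)) \<le> C * min (\<nu> (norm z)) 1"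
    using H1_density_tail_bound[OF H pos r] by blast
  have "AE z in lebesgue.
      f z * \<nu> (norm (w - z)) * indicator (- ball w r) z \<le> (C + 1) * (f z * min (\<nu> (norm z)) 1)"
    using AE_completion[OF AE_lborel_singleton[of 0]]
  proof (rule eventually_mono)
    fix z :: 'a assume z: "z \<noteq> 0"
    have m: "0 \<le> min (\<nu> (norm z)) 1" using H1_density_nonneg[OF H, of "norm z"] z by simp
    show "f z * \<nu> (norm (w - z)) * indicator (- ball w r) z \<le> (C + 1) * (f z * min (\<nu> (norm z)) 1)"
    proof (cases "z \<in> ball w r")
      case True
      then show ?thesis using m f_nonneg[of z] C(1) by simp
    next
      case False
      have "\<nu> (norm (w - z)) \<le> (C + 1) * min (\<nu> (norm z)) 1"
        using C(2)[OF False z] m by (simp add: algebra_simps)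
      then show ?thesis using False f_nonneg[of z] by (simp add: mult_left_mono mult.left_commute)
    qed
  qed
  then have "(\<integral>\<^sup>+ z. ennreal (f z * \<nu> (norm (w - z)) * indicator (- ball w r) z) \<partial>lebesgue)
      \<le> ennreal (C + 1) * (\<integral>\<^sup>+ z. ennreal (f z * min (\<nu> (norm z)) 1) \<partial>lebesgue)"
    using C(1) r by (intro nn_integral_le_cmult exterior_integrand_measurable[OF H f_meas]) auto
  also have "\<dots> < \<infinity>" using f_int by (simp add: ennreal_mult_less_top)
  finally show ?thesis .
qed

lemma exterior_potential_estimates:
  fixes w :: "'a::euclidean_space" and f :: "'a \<Rightarrow> real"
  assumes H: "H1_density a1 \<nu>" and pos: "0 < \<nu> 1" and r: "0 < r" "r \<le> 2"
    and f_meas: "f \<in> borel_measurable lebesgue" and f_nonneg: "\<And>y. 0 \<le> f y"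
    and f_int: "(\<integral>\<^sup>+ y. ennreal (f y * min (\<nu> (norm y)) 1) \<partial>lebesgue) < \<infinity>"
    and g_def: "g = (\<lambda>y. \<integral>\<^sup>+ z. ennreal (f z * \<nu> (norm (y - z))) * indicator (- ball w r) z \<partial>lebesgue)"
  shows "g w < \<infinity>"
    and "y \<in> ball w (r/2) \<Longrightarrow> g y \<le> ennreal a1 * g w"
    and "y \<in> ball w (r/2) \<Longrightarrow> g w \<le> ennreal a1 * g y"
    and "y \<in> ball w (r/2) \<Longrightarrow>
      \<bar>enn2real (g y) - enn2real (g w)\<bar> \<le> 16 * a1\<^sup>2 * min (enn2real (g w)) (enn2real (g y)) * dist y w / r"
proof -
  have a1: "1 \<le> a1" by (rule H1_density_const_ge_one[OF H pos])
  define F where "F y z = f z * \<nu> (norm (y - z)) * indicator (- ball w r) z" for y z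
  have g_F: "g y = (\<integral>\<^sup>+ z. ennreal (F y z) \<partial>lebesgue)" for y
    unfolding g_def F_def by (auto intro!: nn_integral_cong split: split_indicator)
  have w_ball: "w \<in> ball w (r/2)" using r by simp
  have F_meas: "F y \<in> borel_measurable lebesgue" if "y \<in> ball w (r/2)" for y
    unfolding F_def[abs_def] using exterior_integrand_measurable[OF H f_meas r(1) that] by simp
  have F_le: "F y z \<le> c * F y' z"
    if "z \<notin> ball w r \<Longrightarrow> \<nu> (norm (y - z)) \<le> c * \<nu> (norm (y' - z))" for y y' z c
    using that mult_left_mono[OF that f_nonneg[of z]] unfolding F_def
    by (cases "z \<in> ball w r") (auto simp: mult_ac)
  note \<nu>_bounds = H1_density_exterior_comparison[OF H a1 r]
  show "g w < \<infinity>"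
    unfolding g_F F_def using exterior_potential_finite[OF H pos r(1) f_meas f_nonneg f_int] .
  assume y: "y \<in> ball w (r/2)"
  show "g y \<le> ennreal a1 * g w" "g w \<le> ennreal a1 * g y" unfolding g_F
    using a1 by (intro nn_integral_le_cmult F_meas y w_ball AE_I2 F_le \<nu>_bounds[OF y]; simp)+
  have "\<bar>enn2real (g y) - enn2real (g w)\<bar> \<le> 16 * a1\<^sup>2 * dist y w / r * min (enn2real (g y)) (enn2real (g w))"
    unfolding g_F using r
    by (intro enn2real_nn_integral_relative_diff F_meas y w_ball F_le \<nu>_bounds[OF y]) auto
  then show "\<bar>enn2real (g y) - enn2real (g w)\<bar> \<le> 16 * a1\<^sup>2 * min (enn2real (g w)) (enn2real (g y)) * dist y w / r"
    by (simp add: min.commute mult_ac)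
qed

theorem lemma5p4:
  fixes a1 a2 :: real
  shows "\<exists>c>0. \<forall>(M::'m measure) (X::real \<Rightarrow> 'm \<Rightarrow> 'a::euclidean_space) \<nu> (w::'a) r f.
     assumptions_A a1 a2 M X \<nu> \<longrightarrow> 0 < r \<longrightarrow> r \<le> 2 \<longrightarrow>
     f \<in> borel_measurable lebesgue \<longrightarrow> (\<forall>y. f y \<ge> 0) \<longrightarrow>
     (\<integral>\<^sup>+ y. ennreal (f y * min (\<nu> (norm y)) 1) \<partial>lebesgue) < \<infinity> \<longrightarrow>
     (let g = (\<lambda>y. \<integral>\<^sup>+ z. ennreal (f z * \<nu> (norm (y - z))) * indicator (- ball w r) z \<partial>lebesgue)
      in (\<exists>K::real. \<forall>y\<in>ball w (r/2). g y \<le> ennreal K) \<and>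
         (\<forall>y\<in>ball w (r/2).
            \<bar>enn2real (g y) - enn2real (g w)\<bar>
              \<le> c * min (enn2real (g w)) (enn2real (g y)) * dist y w / r) \<and>
         (\<forall>y\<in>ball w (r/2). g w \<le> ennreal c * g y))"
proof (intro exI[of _ "16 * a1\<^sup>2 + 1"] conjI allI impI)
  show "0 < 16 * a1\<^sup>2 + 1" by (simp add: add_nonneg_pos)
  fix M :: "'m measure" and X :: "real \<Rightarrow> 'm \<Rightarrow> 'a" and \<nu> :: "real \<Rightarrow> real"
    and w :: 'a and r :: real and f :: "'a \<Rightarrow> real"
  assume A: "assumptions_A a1 a2 M X \<nu>" and r: "0 < r" "r \<le> 2"
    and f: "f \<in> borel_measurable lebesgue" "\<forall>y. f y \<ge> 0"
    and f_int: "(\<integral>\<^sup>+ y. ennreal (f y * min (\<nu> (norm y)) 1) \<partial>lebesgue) < \<infinity>"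
  have H: "H1_density a1 \<nu>" using A unfolding assumptions_A_def by blast
  have pos: "0 < \<nu> 1"
    using A H1_density_pos_at_one[OF H] unfolding assumptions_A_def levy_H0_def by blast
  have a1: "1 \<le> a1" by (rule H1_density_const_ge_one[OF H pos])
  define c where "c = 16 * a1\<^sup>2 + 1"
  have "a1 * 1 \<le> a1 * a1" using a1 by (intro mult_left_mono) auto
  then have c: "a1 \<le> c" "16 * a1\<^sup>2 \<le> c" using a1 unfolding c_def power2_eq_square by linarith+
  define g where "g = (\<lambda>y. \<integral>\<^sup>+ z. ennreal (f z * \<nu> (norm (y - z))) * indicator (- ball w r) z \<partial>lebesgue)"
  note estimates = exterior_potential_estimates[OF H pos r f(1) f(2)[rule_format] f_int g_def]
  have "g y \<le> ennreal (a1 * enn2real (g w))" if "y \<in> ball w (r/2)" for y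
    using estimates(1) estimates(2)[OF that] a1 by (simp add: ennreal_mult ennreal_enn2real_if less_top)
  moreover have "\<bar>enn2real (g y) - enn2real (g w)\<bar> \<le> c * min (enn2real (g w)) (enn2real (g y)) * dist y w / r"
    if "y \<in> ball w (r/2)" for y
    using estimates(4)[OF that] c r
    by (smt (verit) divide_right_mono enn2real_nonneg min_def mult_right_mono zero_le_dist)
  moreover have "g w \<le> ennreal c * g y" if "y \<in> ball w (r/2)" for y
    using estimates(3)[OF that] c by (smt (verit) ennreal_leI mult_right_mono zero_le order_trans)
  ultimately show "let g = (\<lambda>y. \<integral>\<^sup>+ z. ennreal (f z * \<nu> (norm (y - z))) * indicator (- ball w r) z \<partial>lebesgue)
      in (\<exists>K::real. \<forall>y\<in>ball w (r/2). g y \<le> ennreal K) \<and>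
         (\<forall>y\<in>ball w (r/2).
            \<bar>enn2real (g y) - enn2real (g w)\<bar>
              \<le> (16 * a1\<^sup>2 + 1) * min (enn2real (g w)) (enn2real (g y)) * dist y w / r) \<and>
         (\<forall>y\<in>ball w (r/2). g w \<le> ennreal (16 * a1\<^sup>2 + 1) * g y)"
    unfolding Let_def g_def[symmetric] c_def[symmetric] by blast
qed

end
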